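(* Fix a sequence $(d_n)_{n\ge 0}$ of non-zero complex numbers (the "denominators"). Let $M=(M(n,k))_{n,k\ge 0}$ be an infinite lower triangular complex matrix with all diagonal entries equal to $1$ (a unipotent matrix), and suppose $M$ is the matrix of a substitution with prefunction, i.e. there exist formal power series $g(x),\phi(x)\in\mathbf{C}[[x]]$ with $\phi(0)=0$ such that for every $k\ge 0$ $$\sum_{n\ge 0} M(n,k)\frac{x^n}{d_n}=g(x)\frac{\phi(x)^k}{d_k}.$$ Write $M=I+N$ and, for $t\in\mathbf{C}$, define $M^t=\sum_{j\ge 0}\binom{t}{j}N^j$, where $\binom{t}{j}=\frac{t(t-1)\cdots(t-j+1)}{j!}$. Then for every $t\in\mathbf{C}$, $M^t$ is again the matrix of a substitution with prefunction, i.e. there exist formal power series $g_t,\phi_t\in\mathbf{C}[[x]]$ with $\phi_t(0)=0$ such that $\sum_{n\ge0}M^t(n,k)\frac{x^n}{d_n}=g_t(x)\frac{\phi_t(x)^k}{d_k}$ for all $k\ge 0$.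
   Context: Since $N=M-I$ is strictly lower triangular, each entry of $N^j$ in row $n$ vanishes for $j>n$, so each entry $M^t(n,k)$ is a finite sum (a polynomial in $t$); $M^t$ is lower triangular with ones on the diagonal and satisfies $M^{t_1+t_2}=M^{t_1}M^{t_2}$. The matrix $M$ acts on sequences $(a_k)$ by $b_n=\sum_k M(n,k)a_k$; through the denominators $(d_n)$ a sequence $(a_n)$ is identified with the series $\sum_n a_n x^n/d_n$, and a matrix of the stated form corresponds to the transformation $f(x)\mapsto g(x)f(\phi(x))$. *)

theory Defs
  imports Complex_Main "HOL-Computational_Algebra.Formal_Power_Series"
begin

type_synonym cmat = "nat \<Rightarrow> nat \<Rightarrow> complex"

definition lower_triangular :: "cmat \<Rightarrow> bool" where
  "lower_triangular A \<longleftrightarrow> (\<forall>n k. n < k \<longrightarrow> A n k = 0)"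

definition unipotent :: "cmat \<Rightarrow> bool" where
  "unipotent A \<longleftrightarrow> lower_triangular A \<and> (\<forall>n. A n n = 1)"

definition id_mat :: cmat where
  "id_mat n k = (if n = k then 1 else 0)"

(* Product of infinite matrices where the left factor is lower triangular:
   (A B)(n,k) = sum_j A(n,j) B(j,k), and A(n,j) = 0 for j > n. *)
definition lt_mult :: "cmat \<Rightarrow> cmat \<Rightarrow> cmat" where
  "lt_mult A B n k = (\<Sum>j\<le>n. A n j * B j k)"

primrec lt_pow :: "cmat \<Rightarrow> nat \<Rightarrow> cmat" where
  "lt_pow A 0 = id_mat"
| "lt_pow A (Suc j) = lt_mult A (lt_pow A j)"

(* M^t = sum_{j>=0} (t choose j) N^j with N = M - I; since N is strictly lower
   triangular, the (n,k) entry of N^j vanishes for j > n, so the sum is finite. *)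
definition mat_power_t :: "cmat \<Rightarrow> complex \<Rightarrow> cmat" where
  "mat_power_t M t n k =
     (\<Sum>j\<le>n. (t gchoose j) * lt_pow (\<lambda>a b. M a b - id_mat a b) j n k)"

definition subst_prefun :: "(nat \<Rightarrow> complex) \<Rightarrow> cmat \<Rightarrow> bool" where
  "subst_prefun d M \<longleftrightarrow>
     (\<exists>g \<phi> :: complex fps. fps_nth \<phi> 0 = 0 \<and>
        (\<forall>k. Abs_fps (\<lambda>n. M n k / d n) = fps_const (1 / d k) * g * \<phi> ^ k))"

end

(* Let G_k = sum_n d_k A(n,k) x^n / d_n be the normalised k-th column series of a unipotent
   matrix A. Then A is the matrix of a substitution with prefunction iff
   G_k G_0^k = G_0 G_1^k for all k, with g = G_0 and phi = G_1 / G_0 (unipotence makes G_0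
   invertible and gives phi(0) = 0). Since (g, phi) acts on series as f |-> g (f o phi), such
   matrices are closed under products, and M^(t+1) = M M^t; so for A = M^t the identities hold
   at every natural t. Their coefficients are polynomials in t, hence they hold for all t. *)
theory Submission
  imports Defs "HOL-Computational_Algebra.Polynomial"
begin

unbundle fps_syntax

lemma fps_mult_compose_nth:
  fixes g c p :: "'a::comm_ring_1 fps"
  assumes p0: "p $ 0 = 0"
  shows "(g * (c oo p)) $ n = (\<Sum>j\<le>n. c $ j * (g * p ^ j) $ n)"
proof -
  have "(g * (c oo p)) $ n = (\<Sum>i\<le>n. g $ i * (\<Sum>j\<le>n - i. c $ j * (p ^ j) $ (n - i)))"
    by (simp add: fps_mult_nth fps_compose_nth atLeast0AtMost)
  also have "\<dots> = (\<Sum>i\<le>n. g $ i * (\<Sum>j\<le>n. c $ j * (p ^ j) $ (n - i)))"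
    using startsby_zero_power_prefix[OF p0]
    by (intro sum.cong refl arg_cong2[where f = "(*)"] sum.mono_neutral_left) auto
  also have "\<dots> = (\<Sum>j\<le>n. c $ j * (\<Sum>i\<le>n. g $ i * (p ^ j) $ (n - i)))"
    unfolding sum_distrib_left by (subst sum.swap) (simp add: mult_ac)
  also have "\<dots> = (\<Sum>j\<le>n. c $ j * (g * p ^ j) $ n)"
    by (simp add: fps_mult_nth atLeast0AtMost)
  finally show ?thesis .
qed

definition column_fps :: "(nat \<Rightarrow> complex) \<Rightarrow> cmat \<Rightarrow> nat \<Rightarrow> complex fps" where
  "column_fps d A k = Abs_fps (\<lambda>n. d k * A n k / d n)"

lemma subst_prefun_iff_column_fps:
  assumes d: "\<forall>n. d n \<noteq> 0"
  shows "subst_prefun d A \<longleftrightarrow> (\<exists>g \<phi>. \<phi> $ 0 = 0 \<and> (\<forall>k. column_fps d A k = g * \<phi> ^ k))"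
proof -
  have "Abs_fps (\<lambda>n. A n k / d n) = fps_const (1 / d k) * g * \<phi> ^ k
          \<longleftrightarrow> column_fps d A k = g * \<phi> ^ k" for g \<phi> :: "complex fps" and k
    unfolding mult.assoc fps_eq_iff fps_mult_left_const_nth using d
    by (auto simp: column_fps_def field_simps)
  then show ?thesis
    unfolding subst_prefun_def by simp
qed

lemma subst_prefun_id_mat:
  assumes "\<forall>n. d n \<noteq> 0"
  shows "subst_prefun d id_mat"
  unfolding subst_prefun_iff_column_fps[OF assms]
proof (intro exI conjI allI)
  show "fps_X $ 0 = (0::complex)"
    by simp
  show "column_fps d id_mat k = 1 * fps_X ^ k" for k
    using assms by (intro fps_ext) (simp add: column_fps_def id_mat_def fps_X_power_iff)
qed

lemma subst_prefun_lt_mult: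
  assumes d: "\<forall>n. d n \<noteq> 0" and "subst_prefun d A" and "subst_prefun d B"
  shows "subst_prefun d (lt_mult A B)"
proof -
  obtain ga pa where pa0: "pa $ 0 = 0" and A: "\<And>k. column_fps d A k = ga * pa ^ k"
    using assms(2) unfolding subst_prefun_iff_column_fps[OF d] by blast
  obtain gb pb where pb0: "pb $ 0 = 0" and B: "\<And>k. column_fps d B k = gb * pb ^ k"
    using assms(3) unfolding subst_prefun_iff_column_fps[OF d] by blast
  have "column_fps d (lt_mult A B) k = ga * (gb oo pa) * (pb oo pa) ^ k" for k
  proof -
    have "column_fps d (lt_mult A B) k = ga * (column_fps d B k oo pa)"
    proof (rule fps_ext)
      fix n
      have "(ga * (column_fps d B k oo pa)) $ n = (\<Sum>j\<le>n. d k * B j k / d j * (d j * A n j / d n))"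
        by (simp add: fps_mult_compose_nth[OF pa0] flip: A) (simp add: column_fps_def)
      also have "\<dots> = column_fps d (lt_mult A B) k $ n"
        using d by (simp add: column_fps_def lt_mult_def sum_distrib_left sum_divide_distrib mult_ac)
      finally show "column_fps d (lt_mult A B) k $ n = (ga * (column_fps d B k oo pa)) $ n" ..
    qed
    then show ?thesis
      by (simp add: B fps_compose_mult_distrib[OF pa0] fps_compose_power[OF pa0] mult_ac)
  qed
  moreover have "(pb oo pa) $ 0 = 0"
    using pb0 by simp
  ultimately show ?thesis
    unfolding subst_prefun_iff_column_fps[OF d] by blast
qed

lemma subst_prefun_iff_column_fps_identity:
  assumes d: "\<forall>n. d n \<noteq> 0" and "unipotent A"
  shows "subst_prefun d A \<longleftrightarrow>
    (\<forall>k. column_fps d A k * column_fps d A 0 ^ k = column_fps d A 0 * column_fps d A 1 ^ k)"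
    (is "_ \<longleftrightarrow> (\<forall>k. ?G k * ?G 0 ^ k = ?G 0 * ?G 1 ^ k)")
proof
  assume "subst_prefun d A"
  then obtain g \<phi> where "\<And>k. ?G k = g * \<phi> ^ k"
    unfolding subst_prefun_iff_column_fps[OF d] by blast
  then show "\<forall>k. ?G k * ?G 0 ^ k = ?G 0 * ?G 1 ^ k"
    by (simp add: power_mult_distrib mult_ac)
next
  assume identity: "\<forall>k. ?G k * ?G 0 ^ k = ?G 0 * ?G 1 ^ k"
  have A00: "A 0 0 = 1" and A01: "A 0 1 = 0"
    using \<open>unipotent A\<close> unfolding unipotent_def lower_triangular_def by auto
  have inv: "?G 0 * inverse (?G 0) = 1"
    using d A00 by (intro inverse_mult_eq_1') (simp add: column_fps_def)
  have "?G k = ?G 0 * (?G 1 * inverse (?G 0)) ^ k" for k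
  proof -
    have "?G k = ?G k * (?G 0 * inverse (?G 0)) ^ k"
      by (simp add: inv)
    also have "\<dots> = ?G 0 * (?G 1 * inverse (?G 0)) ^ k"
      by (simp add: identity power_mult_distrib mult.assoc flip: mult.assoc[of "?G k"])
    finally show ?thesis .
  qed
  moreover have "(?G 1 * inverse (?G 0)) $ 0 = 0"
    using A01 by (simp add: column_fps_def)
  ultimately show "subst_prefun d A"
    unfolding subst_prefun_iff_column_fps[OF d] by blast
qed

definition nil_part :: "cmat \<Rightarrow> cmat" where
  "nil_part M a b = M a b - id_mat a b"

lemma mat_power_t_nil_part:
  "mat_power_t M t n k = (\<Sum>j\<le>n. (t gchoose j) * lt_pow (nil_part M) j n k)"
  by (simp add: mat_power_t_def nil_part_def[abs_def])

lemma lt_pow_strictly_lower_eq_0: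
  assumes "\<And>a b. a \<le> b \<Longrightarrow> N a b = 0" and "a < b + j"
  shows "lt_pow N j a b = 0"
  using assms(2)
proof (induction j arbitrary: a)
  case 0
  then show ?case
    by (simp add: id_mat_def)
next
  case (Suc j)
  have "N a i * lt_pow N j i b = 0" if "i \<le> a" for i
    using Suc.IH[of i] Suc.prems assms(1)[of a i] that by (cases "i < a") auto
  then show ?case
    by (auto simp: lt_mult_def intro!: sum.neutral)
qed

lemma lt_pow_nil_part_eq_0:
  assumes "unipotent M" and "a < b + j"
  shows "lt_pow (nil_part M) j a b = 0"
proof (rule lt_pow_strictly_lower_eq_0[OF _ assms(2)])
  show "nil_part M a' b' = 0" if "a' \<le> b'" for a' b'
    using assms(1) that
    by (cases "a' = b'") (auto simp: nil_part_def id_mat_def unipotent_def lower_triangular_def)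
qed

lemma mat_power_t_eq_sum_upto:
  assumes "unipotent M" and "n \<le> m"
  shows "mat_power_t M t n k = (\<Sum>j\<le>m. (t gchoose j) * lt_pow (nil_part M) j n k)"
  unfolding mat_power_t_nil_part using assms
  by (intro sum.mono_neutral_left) (auto simp: lt_pow_nil_part_eq_0)

lemma mat_power_t_0: "mat_power_t M 0 = id_mat"
proof (intro ext)
  fix n k
  have "mat_power_t M 0 n k = (\<Sum>j\<le>n. if j = 0 then lt_pow (nil_part M) j n k else 0)"
    unfolding mat_power_t_nil_part by (intro sum.cong) (auto simp: gbinomial_0_left)
  then show "mat_power_t M 0 n k = id_mat n k"
    by simp
qed

lemma mat_power_t_upper:
  assumes "unipotent M" and "n \<le> k"
  shows "mat_power_t M t n k = id_mat n k"
proof -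
  have "mat_power_t M t n k = (\<Sum>j\<le>n. if j = 0 then lt_pow (nil_part M) j n k else 0)"
    unfolding mat_power_t_nil_part using assms
    by (intro sum.cong) (auto simp: lt_pow_nil_part_eq_0)
  then show ?thesis
    by simp
qed

lemma unipotent_mat_power_t:
  assumes "unipotent M"
  shows "unipotent (mat_power_t M t)"
  using mat_power_t_upper[OF assms]
  by (simp add: unipotent_def lower_triangular_def id_mat_def)

lemma lt_mult_id_mat_left: "lt_mult id_mat A = A"
proof (intro ext)
  fix n k
  have "lt_mult id_mat A n k = (\<Sum>j\<le>n. if n = j then A j k else 0)"
    unfolding lt_mult_def by (intro sum.cong) (auto simp: id_mat_def)
  then show "lt_mult id_mat A n k = A n k"
    by simp
qed

lemma lt_mult_nil_part_left: "lt_mult M A n k = A n k + lt_mult (nil_part M) A n k"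
proof -
  have "lt_mult M A n k = lt_mult id_mat A n k + lt_mult (nil_part M) A n k"
    by (simp add: lt_mult_def nil_part_def sum_subtractf algebra_simps)
  then show ?thesis
    by (simp add: lt_mult_id_mat_left)
qed

lemma mat_power_t_add_1:
  assumes u: "unipotent M"
  shows "mat_power_t M (t + 1) = lt_mult M (mat_power_t M t)"
proof (intro ext)
  fix n k
  let ?P = "lt_pow (nil_part M)"
  have "lt_mult (nil_part M) (mat_power_t M t) n k = (\<Sum>j\<le>n. (t gchoose j) * ?P (Suc j) n k)"
  proof -
    have "(\<Sum>i\<le>n. nil_part M n i * mat_power_t M t i k)
        = (\<Sum>i\<le>n. \<Sum>j\<le>n. (t gchoose j) * (nil_part M n i * ?P j i k))"
      by (intro sum.cong refl)
        (simp add: mat_power_t_eq_sum_upto[OF u] sum_distrib_left mult.left_commute)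
    then show ?thesis
      by (subst (asm) sum.swap) (simp add: lt_mult_def sum_distrib_left)
  qed
  then have "lt_mult M (mat_power_t M t) n k
      = mat_power_t M t n k + (\<Sum>j\<le>n. (t gchoose j) * ?P (Suc j) n k)"
    by (simp add: lt_mult_nil_part_left[of M])
  also have "mat_power_t M t n k + (\<Sum>j\<le>n. (t gchoose j) * ?P (Suc j) n k)
      = mat_power_t M (t + 1) n k"
  proof -
    have "mat_power_t M (t + 1) n k = (\<Sum>j\<le>Suc n. ((t + 1) gchoose j) * ?P j n k)"
      by (rule mat_power_t_eq_sum_upto[OF u]) simp
    also have "\<dots> = (\<Sum>j\<le>Suc n. (t gchoose j) * ?P j n k)
        + (\<Sum>j\<le>n. (t gchoose j) * ?P (Suc j) n k)"
      unfolding sum.atMost_Suc_shift gbinomial_Suc_Suc distrib_right sum.distrib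
      by (simp del: lt_pow.simps add: ac_simps)
    also have "(\<Sum>j\<le>Suc n. (t gchoose j) * ?P j n k) = mat_power_t M t n k"
      by (rule mat_power_t_eq_sum_upto[OF u, symmetric]) simp
    finally show ?thesis
      by simp
  qed
  finally show "mat_power_t M (t + 1) n k = lt_mult M (mat_power_t M t) n k"
    by simp
qed

lemma subst_prefun_mat_power_t_of_nat:
  assumes d: "\<forall>n. d n \<noteq> 0" and u: "unipotent M" and "subst_prefun d M"
  shows "subst_prefun d (mat_power_t M (of_nat m))"
proof (induction m)
  case 0
  then show ?case
    using subst_prefun_id_mat[OF d] by (simp add: mat_power_t_0)
next
  case (Suc m)
  then show ?case
    using subst_prefun_lt_mult[OF d \<open>subst_prefun d M\<close>]
    unfolding of_nat_Suc add.commute[of 1] mat_power_t_add_1[OF u] by blast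
qed

definition binomial_poly :: "nat \<Rightarrow> 'a::field_char_0 poly" where
  "binomial_poly j = smult (1 / fact j) (\<Prod>i<j. [:- of_nat i, 1:])"

lemma poly_binomial_poly: "poly (binomial_poly j) t = t gchoose j"
  by (simp add: binomial_poly_def poly_prod gbinomial_prod_rev atLeast0LessThan field_simps)

definition fps_poly_eval :: "'a::comm_ring_1 \<Rightarrow> 'a poly fps \<Rightarrow> 'a fps" where
  "fps_poly_eval t F = Abs_fps (\<lambda>n. poly (F $ n) t)"

lemma fps_poly_eval_mult [simp]: "fps_poly_eval t (F * G) = fps_poly_eval t F * fps_poly_eval t G"
  by (rule fps_ext) (simp add: fps_poly_eval_def fps_mult_nth poly_sum)

lemma fps_poly_eval_power [simp]: "fps_poly_eval t (F ^ k) = fps_poly_eval t F ^ k"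
proof (induction k)
  case 0
  show ?case
    by (rule fps_ext) (simp add: fps_poly_eval_def)
qed simp

lemma fps_poly_eval_eq_if_of_nat:
  fixes F G :: "'a::{idom,ring_char_0} poly fps"
  assumes "\<And>m. fps_poly_eval (of_nat m) F = fps_poly_eval (of_nat m) G"
  shows "fps_poly_eval t F = fps_poly_eval t G"
proof -
  have "F $ n = G $ n" for n
  proof (rule ccontr)
    assume "F $ n \<noteq> G $ n"
    then have "finite {x. poly (F $ n - G $ n) x = 0}"
      by (intro poly_roots_finite) simp
    moreover have "range of_nat \<subseteq> {x. poly (F $ n - G $ n) x = 0}"
      using assms by (auto simp: fps_poly_eval_def fps_eq_iff)
    ultimately show False
      using range_inj_infinite[OF inj_of_nat] finite_subset by blast
  qed
  then have "F = G"
    by (simp add: fps_eq_iff)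
  then show ?thesis
    by simp
qed

definition column_fps_poly :: "(nat \<Rightarrow> complex) \<Rightarrow> cmat \<Rightarrow> nat \<Rightarrow> complex poly fps" where
  "column_fps_poly d M k =
     Abs_fps (\<lambda>n. smult (d k / d n) (\<Sum>j\<le>n. smult (lt_pow (nil_part M) j n k) (binomial_poly j)))"

lemma fps_poly_eval_column_fps_poly:
  "fps_poly_eval t (column_fps_poly d M k) = column_fps d (mat_power_t M t) k"
  by (rule fps_ext)
    (simp add: fps_poly_eval_def column_fps_poly_def column_fps_def mat_power_t_nil_part
      poly_sum poly_binomial_poly sum_distrib_left sum_divide_distrib mult_ac)

theorem mainTheorem1:
  fixes d :: "nat \<Rightarrow> complex" and M :: "nat \<Rightarrow> nat \<Rightarrow> complex"
  assumes "\<forall>n. d n \<noteq> 0"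
    and "unipotent M"
    and "subst_prefun d M"
  shows "\<forall>t::complex. subst_prefun d (mat_power_t M t)"
proof
  fix t :: complex
  let ?P = "column_fps_poly d M"
  have subst_prefun_power_iff: "subst_prefun d (mat_power_t M s) \<longleftrightarrow>
      (\<forall>k. fps_poly_eval s (?P k * ?P 0 ^ k) = fps_poly_eval s (?P 0 * ?P 1 ^ k))" for s
    unfolding fps_poly_eval_mult fps_poly_eval_power fps_poly_eval_column_fps_poly
    by (rule subst_prefun_iff_column_fps_identity[OF assms(1) unipotent_mat_power_t[OF assms(2)]])
  have "fps_poly_eval t (?P k * ?P 0 ^ k) = fps_poly_eval t (?P 0 * ?P 1 ^ k)" for k
  proof (rule fps_poly_eval_eq_if_of_nat)
    show "fps_poly_eval (of_nat m) (?P k * ?P 0 ^ k) = fps_poly_eval (of_nat m) (?P 0 * ?P 1 ^ k)"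
      for m
      using subst_prefun_mat_power_t_of_nat[OF assms, of m] unfolding subst_prefun_power_iff by blast
  qed
  then show "subst_prefun d (mat_power_t M t)"
    unfolding subst_prefun_power_iff by blast
qed

end
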